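(* Let $\tau\in(0,1]$, $\mathbf{w},\mathbf{w}_\ast\in\mathbb{R}^d$, $r\ge\|\mathbf{w}-\mathbf{w}_\ast\|_2$, and $\mathbf{v}\in\mathbb{R}^d$ with $\|\mathbf{v}\|_2=1$. For $\mathbf{x}\in\mathbb{R}^d$ let $\sigma^\tau=\sigma(\tau\,\mathbf{x}^\top\mathbf{w})$ and $$s(\mathbf{x})=2\Big[(\sigma^\tau)^2+\tau\big(\rho_\tau(\mathbf{x}^\top\mathbf{w})-\rho_\tau(\mathbf{x}^\top\mathbf{w}_\ast)\big)\big(\sigma^\tau-(\sigma^\tau)^2\big)\Big].$$ Then (i) for any $\mathbf{x}_1,\dots,\mathbf{x}_n$ with noiseless labels $y_i=\rho(\mathbf{x}_i^\top\mathbf{w}_\ast)$, $\nabla^2\mathcal{L}_\tau(\mathbf{w})=\frac1n\sum_{i=1}^n s(\mathbf{x}_i)\mathbf{x}_i\mathbf{x}_i^\top$; and (ii) for $\mathbf{x}\sim\mathcal{N}(\mathbf{0},I_d)$, $$\mathbb{E}\big[s(\mathbf{x})\langle\mathbf{x},\mathbf{v}\rangle^2\big]\ \ge\ 2\left(\frac{e^{-4}}{\big(1+\exp(\tau^2\|\mathbf{w}\|_2^2/2)\big)^2}-\frac{\tau r}{\sqrt{2\pi}}\right).$$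
   Context: $\sigma(v)=1/(1+e^{-v})$ is the sigmoid and $\rho(v)=\ln(1+e^{v})$ the softplus. The graduated softplus is $\rho_\tau(v)=\frac1\tau\ln(1+e^{\tau v})$. Given data $(\mathbf{x}_i,y_i)$, graduated labels are $y_i^\tau=\rho_\tau(\rho^{-1}(y_i))$ (equal to $\rho_\tau(\mathbf{x}_i^\top\mathbf{w}_\ast)$ for noiseless labels) and the graduated objective is $\mathcal{L}_\tau(\mathbf{w})=\frac1n\sum_{i=1}^n\big(y_i^\tau-\rho_\tau(\mathbf{x}_i^\top\mathbf{w})\big)^2$. *)

theory Defs
  imports "HOL-Analysis.Analysis" "HOL-Probability.Probability"
begin

definition sigmoid :: "real \<Rightarrow> real" where
  "sigmoid v = 1 / (1 + exp (- v))"

definition softplus :: "real \<Rightarrow> real" where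
  "softplus v = ln (1 + exp v)"

definition softplus_inv :: "real \<Rightarrow> real" where
  "softplus_inv y = ln (exp y - 1)"

definition gsoftplus :: "real \<Rightarrow> real \<Rightarrow> real" where
  "gsoftplus \<tau> v = ln (1 + exp (\<tau> * v)) / \<tau>"

definition grad_label :: "real \<Rightarrow> real \<Rightarrow> real" where
  "grad_label \<tau> y = gsoftplus \<tau> (softplus_inv y)"

definition grad_loss ::
  "real \<Rightarrow> nat \<Rightarrow> (nat \<Rightarrow> real^'d) \<Rightarrow> (nat \<Rightarrow> real) \<Rightarrow> real^'d \<Rightarrow> real" where
  "grad_loss \<tau> n x y w =
     (1 / real n) * (\<Sum>i<n. (grad_label \<tau> (y i) - gsoftplus \<tau> (x i \<bullet> w))\<^sup>2)"

definition s_fun :: "real \<Rightarrow> real^'d \<Rightarrow> real^'d \<Rightarrow> real^'d \<Rightarrow> real" where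
  "s_fun \<tau> w ws x =
     (let sg = sigmoid (\<tau> * (x \<bullet> w)) in
      2 * (sg\<^sup>2 + \<tau> * (gsoftplus \<tau> (x \<bullet> w) - gsoftplus \<tau> (x \<bullet> ws)) * (sg - sg\<^sup>2)))"

definition outer :: "real^'d \<Rightarrow> real^'d^'d" where
  "outer x = (\<chi> i j. x $ i * x $ j)"

definition std_gauss :: "(real^'d) measure" where
  "std_gauss = density lborel
     (\<lambda>x. ennreal ((2 * pi) powr (- real CARD('d) / 2) * exp (- (norm x)\<^sup>2 / 2)))"

end

theory Submission
  imports Defs
begin

text \<open>(i) Since \<open>\<rho>\<^sub>\<tau>' t = \<sigma>(\<tau> t)\<close>, the gradient of the noiseless graduated loss at \<open>u\<close> is
  \<open>(1/n) \<Sum>\<^sub>i 2 (\<rho>\<^sub>\<tau>(x\<^sub>i\<bullet>u) - \<rho>\<^sub>\<tau>(x\<^sub>i\<bullet>w\<^sub>*)) \<sigma>(\<tau> x\<^sub>i\<bullet>u) x\<^sub>i\<close>; differentiating once more,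
  using \<open>\<sigma>' = \<sigma> - \<sigma>\<^sup>2\<close>, gives \<open>(1/n) \<Sum>\<^sub>i s(x\<^sub>i) x\<^sub>i x\<^sub>i\<^sup>T\<close>.

  (ii) As \<open>\<sigma>(-t) = 1 - \<sigma>(t)\<close>, \<open>0 \<le> \<sigma> - \<sigma>\<^sup>2 \<le> 1/4\<close> and \<open>\<rho>\<^sub>\<tau>\<close> is 1-Lipschitz, we get
  \<open>s(x) + s(-x) \<ge> 2\<sigma>\<^sup>2 + 2(1 - \<sigma>)\<^sup>2 - (\<tau>/2)\<bar>x\<bullet>u\<bar> \<ge> 1 - (\<tau>/2)\<bar>x\<bullet>u\<bar>\<close> with \<open>u = w\<^sub>* - w\<close>.
  The Gaussian is symmetric, so \<open>2 E[s(x)(x\<bullet>v)\<^sup>2] \<ge> E(x\<bullet>v)\<^sup>2 - (\<tau>/2) E[\<bar>x\<bullet>u\<bar>(x\<bullet>v)\<^sup>2] \<ge> 1 - \<tau>\<parallel>u\<parallel>\<close>;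
  the last step is AM-GM with weight \<open>\<parallel>u\<parallel>\<close> together with the moments \<open>E(x\<bullet>e)\<^sup>2 = 1\<close>,
  \<open>E(x\<bullet>e)\<^sup>4 = 3\<close> of the standard normal variable \<open>x\<bullet>e\<close> (\<open>e\<close> a unit vector).
  Half of \<open>1 - \<tau>r\<close> already exceeds the claimed bound, whose first term is below \<open>e\<^sup>-\<^sup>4\<close>.\<close>

section \<open>Sigmoid and graduated softplus\<close>

lemma one_add_exp_gt_zero [simp]: "0 < 1 + exp (x :: real)"
  and one_add_exp_neq_zero [simp]: "1 + exp (x :: real) \<noteq> 0"
  using add_pos_pos[OF zero_less_one exp_gt_zero, of x] by auto

lemma sigmoid_pos: "0 < sigmoid z"
  by (simp add: sigmoid_def)

lemma sigmoid_less_1: "sigmoid z < 1"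
  by (simp add: sigmoid_def)

lemma sigmoid_minus: "sigmoid (- z) = 1 - sigmoid z"
  by (simp add: sigmoid_def exp_minus field_simps)

lemma sigmoid_eq_exp_div: "sigmoid z = exp z / (1 + exp z)"
  by (simp add: sigmoid_def exp_minus field_simps)

lemma sigmoid_sub_sq_nonneg: "0 \<le> sigmoid z - (sigmoid z)\<^sup>2"
  using sigmoid_pos[of z] sigmoid_less_1[of z] by (simp add: power2_eq_square mult_le_cancel_left1)

lemma sigmoid_sub_sq_le: "sigmoid z - (sigmoid z)\<^sup>2 \<le> 1 / 4"
  using zero_le_power2[of "sigmoid z - 1 / 2"] by (simp add: power2_eq_square algebra_simps)

lemma DERIV_sigmoid: "(sigmoid has_real_derivative sigmoid z - (sigmoid z)\<^sup>2) (at z)"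
proof -
  have "(sigmoid has_real_derivative exp (- z) / (1 + exp (- z))\<^sup>2) (at z)"
    unfolding sigmoid_def[abs_def]
    by (auto intro!: derivative_eq_intros simp: power2_eq_square)
  moreover have "exp (- z) / (1 + exp (- z))\<^sup>2 = sigmoid z - (sigmoid z)\<^sup>2"
    by (simp add: sigmoid_def divide_simps) (simp add: algebra_simps power2_eq_square)
  ultimately show ?thesis by simp
qed

lemma softplus_inv_softplus: "softplus_inv (softplus t) = t"
  by (simp add: softplus_inv_def softplus_def)

lemma DERIV_gsoftplus:
  assumes "0 < \<tau>"
  shows "(gsoftplus \<tau> has_real_derivative sigmoid (\<tau> * t)) (at t)"
proof -
  have "(gsoftplus \<tau> has_real_derivative exp (\<tau> * t) * \<tau> / (1 + exp (\<tau> * t)) / \<tau>) (at t)"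
    unfolding gsoftplus_def[abs_def] by (auto intro!: derivative_eq_intros)
  then show ?thesis using assms by (simp add: sigmoid_eq_exp_div)
qed

lemma gsoftplus_mono: "0 < \<tau> \<Longrightarrow> p \<le> q \<Longrightarrow> gsoftplus \<tau> p \<le> gsoftplus \<tau> q"
  unfolding gsoftplus_def by (intro divide_right_mono) auto

lemma gsoftplus_diff_le:
  assumes "0 < \<tau>" "p \<le> q"
  shows "gsoftplus \<tau> q - gsoftplus \<tau> p \<le> q - p"
proof -
  have "1 + exp (\<tau> * q) \<le> exp (\<tau> * (q - p)) * (1 + exp (\<tau> * p))"
    using assms by (simp add: algebra_simps flip: exp_add)
  then have "ln (1 + exp (\<tau> * q)) \<le> ln (exp (\<tau> * (q - p)) * (1 + exp (\<tau> * p)))"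
    by simp
  also have "\<dots> = \<tau> * (q - p) + ln (1 + exp (\<tau> * p))"
    by (simp add: ln_mult)
  finally have "(ln (1 + exp (\<tau> * q)) - ln (1 + exp (\<tau> * p))) / \<tau> \<le> q - p"
    using assms(1) by (simp add: divide_le_eq mult.commute)
  then show ?thesis
    by (simp add: gsoftplus_def diff_divide_distrib)
qed

lemma abs_gsoftplus_diff_le: "0 < \<tau> \<Longrightarrow> \<bar>gsoftplus \<tau> p - gsoftplus \<tau> q\<bar> \<le> \<bar>p - q\<bar>"
  using gsoftplus_diff_le[of \<tau> p q] gsoftplus_diff_le[of \<tau> q p]
    gsoftplus_mono[of \<tau> p q] gsoftplus_mono[of \<tau> q p]
  by (cases "p \<le> q") auto

lemma gsoftplus_diff_ge: "0 < \<tau> \<Longrightarrow> - max 0 (q - p) \<le> gsoftplus \<tau> p - gsoftplus \<tau> q"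
  using gsoftplus_diff_le[of \<tau> p q] gsoftplus_mono[of \<tau> q p] by (cases "p \<le> q") auto

section \<open>The Hessian of the graduated loss\<close>

lemma has_derivative_inner_left_comp:
  fixes a :: "'a::real_inner"
  assumes "(\<phi> has_real_derivative D) (at (a \<bullet> u))"
  shows "((\<lambda>u. \<phi> (a \<bullet> u)) has_derivative (\<lambda>h. D * (a \<bullet> h))) (at u)"
  using has_derivative_compose[OF has_derivative_inner_right[OF has_derivative_ident]
      assms[THEN has_field_derivative_imp_has_derivative]]
  by simp

lemma DERIV_gsoftplus_residual_sq:
  assumes "0 < \<tau>"
  shows "((\<lambda>t. (c - gsoftplus \<tau> t)\<^sup>2) has_real_derivative
           2 * (gsoftplus \<tau> t - c) * sigmoid (\<tau> * t)) (at t)"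
proof -
  have "((\<lambda>t. c - gsoftplus \<tau> t) has_real_derivative 0 - sigmoid (\<tau> * t)) (at t)"
    by (intro DERIV_diff DERIV_const DERIV_gsoftplus assms)
  from DERIV_power[OF this, of 2] show ?thesis
    by (simp add: algebra_simps)
qed

lemma DERIV_gsoftplus_residual_slope:
  assumes "0 < \<tau>"
  shows "((\<lambda>t. 2 * (gsoftplus \<tau> t - c) * sigmoid (\<tau> * t)) has_real_derivative
      2 * ((sigmoid (\<tau> * t))\<^sup>2 + \<tau> * (gsoftplus \<tau> t - c) * (sigmoid (\<tau> * t) - (sigmoid (\<tau> * t))\<^sup>2)))
      (at t)"
proof -
  have slope: "((\<lambda>t. sigmoid (\<tau> * t)) has_real_derivative (sigmoid (\<tau> * t) - (sigmoid (\<tau> * t))\<^sup>2) * \<tau>) (at t)"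
    using DERIV_chain[OF DERIV_sigmoid DERIV_cmult_Id[of \<tau> t]] by (simp add: o_def)
  have residual: "((\<lambda>t. 2 * (gsoftplus \<tau> t - c)) has_real_derivative 2 * (sigmoid (\<tau> * t) - 0)) (at t)"
    by (intro DERIV_cmult DERIV_diff DERIV_const DERIV_gsoftplus assms)
  from DERIV_mult'[OF residual slope] show ?thesis
    by (simp add: algebra_simps power2_eq_square)
qed

definition residual_gradient ::
  "real \<Rightarrow> nat \<Rightarrow> (nat \<Rightarrow> real^'d) \<Rightarrow> (nat \<Rightarrow> real) \<Rightarrow> real^'d \<Rightarrow> real^'d" where
  "residual_gradient \<tau> n x c u =
     (1 / real n) *\<^sub>R (\<Sum>i<n. (2 * (gsoftplus \<tau> (x i \<bullet> u) - c i) * sigmoid (\<tau> * (x i \<bullet> u))) *\<^sub>R x i)"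

lemma has_derivative_residual_loss:
  assumes "0 < \<tau>"
  shows "((\<lambda>u. (1 / real n) * (\<Sum>i<n. (c i - gsoftplus \<tau> (x i \<bullet> u))\<^sup>2)) has_derivative
           (\<lambda>h. residual_gradient \<tau> n x c u \<bullet> h)) (at u)"
proof -
  have "((\<lambda>u. (1 / real n) * (\<Sum>i<n. (c i - gsoftplus \<tau> (x i \<bullet> u))\<^sup>2)) has_derivative
       (\<lambda>h. (1 / real n) * (\<Sum>i<n. 2 * (gsoftplus \<tau> (x i \<bullet> u) - c i) * sigmoid (\<tau> * (x i \<bullet> u)) * (x i \<bullet> h))))
       (at u)"
    by (intro has_derivative_mult_right has_derivative_sum has_derivative_inner_left_comp
        DERIV_gsoftplus_residual_sq assms)
  then show ?thesis
    by (simp add: residual_gradient_def inner_sum_left)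
qed

lemma outer_mult_vec: "outer a *v h = (a \<bullet> h) *\<^sub>R a"
  by (simp add: vec_eq_iff outer_def matrix_vector_mult_def inner_vec_def sum_distrib_left mult_ac)

lemma sum_matrix_vector_mult: "(\<Sum>i\<in>I. A i) *v h = (\<Sum>i\<in>I. A i *v h)"
  for A :: "'i \<Rightarrow> real^'n^'m"
  by (simp add: vec_eq_iff matrix_vector_mult_def sum_distrib_right sum.swap[of _ _ I])

lemma has_derivative_residual_gradient:
  assumes "0 < \<tau>"
  shows "(residual_gradient \<tau> n x c has_derivative
           (\<lambda>h. ((1 / real n) *\<^sub>R (\<Sum>i<n.
              (2 * ((sigmoid (\<tau> * (x i \<bullet> w)))\<^sup>2 + \<tau> * (gsoftplus \<tau> (x i \<bullet> w) - c i) *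
                   (sigmoid (\<tau> * (x i \<bullet> w)) - (sigmoid (\<tau> * (x i \<bullet> w)))\<^sup>2)))
              *\<^sub>R outer (x i))) *v h)) (at w)"
proof -
  have "(residual_gradient \<tau> n x c has_derivative
      (\<lambda>h. (1 / real n) *\<^sub>R (\<Sum>i<n. (2 * ((sigmoid (\<tau> * (x i \<bullet> w)))\<^sup>2 + \<tau> * (gsoftplus \<tau> (x i \<bullet> w) - c i) *
          (sigmoid (\<tau> * (x i \<bullet> w)) - (sigmoid (\<tau> * (x i \<bullet> w)))\<^sup>2)) * (x i \<bullet> h)) *\<^sub>R x i))) (at w)"
    unfolding residual_gradient_def[abs_def]
    by (intro has_derivative_scaleR_right has_derivative_sum has_derivative_scaleR_left
        has_derivative_inner_left_comp DERIV_gsoftplus_residual_slope assms)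
  then show ?thesis
    by (simp add: sum_matrix_vector_mult outer_mult_vec flip: scaleR_matrix_vector_assoc)
qed

lemma grad_loss_noiseless:
  assumes "\<forall>i<n. y i = softplus (x i \<bullet> ws)"
  shows "grad_loss \<tau> n x y = (\<lambda>u. (1 / real n) * (\<Sum>i<n. (gsoftplus \<tau> (x i \<bullet> ws) - gsoftplus \<tau> (x i \<bullet> u))\<^sup>2))"
  using assms by (auto simp: fun_eq_iff grad_loss_def grad_label_def softplus_inv_softplus intro!: sum.cong)

lemma grad_loss_hessian:
  assumes "0 < \<tau>" and "\<forall>i<n. y i = softplus (x i \<bullet> ws)"
  shows "\<exists>g :: real^'d \<Rightarrow> real^'d.
           (\<forall>u. (grad_loss \<tau> n x y has_derivative (\<lambda>h. g u \<bullet> h)) (at u)) \<and>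
           (g has_derivative
              (\<lambda>h. ((1 / real n) *\<^sub>R (\<Sum>i<n. s_fun \<tau> w ws (x i) *\<^sub>R outer (x i))) *v h)) (at w)"
proof (intro exI conjI allI)
  let ?c = "\<lambda>i. gsoftplus \<tau> (x i \<bullet> ws)"
  show "(grad_loss \<tau> n x y has_derivative (\<lambda>h. residual_gradient \<tau> n x ?c u \<bullet> h)) (at u)" for u
    unfolding grad_loss_noiseless[OF assms(2)] by (rule has_derivative_residual_loss[OF assms(1)])
  show "(residual_gradient \<tau> n x ?c has_derivative
          (\<lambda>h. ((1 / real n) *\<^sub>R (\<Sum>i<n. s_fun \<tau> w ws (x i) *\<^sub>R outer (x i))) *v h)) (at w)"
    using has_derivative_residual_gradient[OF assms(1), of n x ?c w]
    by (simp add: s_fun_def Let_def)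
qed

section \<open>Pointwise bounds on \<open>s\<close>\<close>

lemma s_fun_ge:
  assumes "0 < \<tau>"
  shows "2 * (sigmoid (\<tau> * (z \<bullet> w)))\<^sup>2 - \<tau> / 2 * max 0 (z \<bullet> (ws - w)) \<le> s_fun \<tau> w ws z"
proof -
  define S where "S = sigmoid (\<tau> * (z \<bullet> w))"
  define D where "D = gsoftplus \<tau> (z \<bullet> w) - gsoftplus \<tau> (z \<bullet> ws)"
  define M where "M = max 0 (z \<bullet> (ws - w))"
  have m: "0 \<le> S - S\<^sup>2" "S - S\<^sup>2 \<le> 1 / 4"
    unfolding S_def by (rule sigmoid_sub_sq_nonneg sigmoid_sub_sq_le)+
  have "- M \<le> D"
    unfolding D_def M_def inner_diff_right by (rule gsoftplus_diff_ge[OF assms])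
  then have "- M * (S - S\<^sup>2) \<le> D * (S - S\<^sup>2)"
    using m(1) by (rule mult_right_mono)
  moreover have "- M * (1 / 4) \<le> - M * (S - S\<^sup>2)"
    using m(2) by (rule mult_left_mono_neg) (simp add: M_def)
  ultimately have "- M / 4 \<le> D * (S - S\<^sup>2)"
    by simp
  then have "\<tau> * (- M / 4) \<le> \<tau> * (D * (S - S\<^sup>2))"
    using assms by (intro mult_left_mono) auto
  then show ?thesis
    unfolding s_fun_def Let_def S_def[symmetric] D_def[symmetric] M_def[symmetric] by simp
qed

lemma abs_s_fun_le:
  assumes "0 < \<tau>"
  shows "\<bar>s_fun \<tau> w ws z\<bar> \<le> 2 + \<tau> / 2 * \<bar>z \<bullet> (ws - w)\<bar>"
proof -
  define S where "S = sigmoid (\<tau> * (z \<bullet> w))"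
  define D where "D = gsoftplus \<tau> (z \<bullet> w) - gsoftplus \<tau> (z \<bullet> ws)"
  have m: "0 \<le> S - S\<^sup>2" "S - S\<^sup>2 \<le> 1 / 4"
    unfolding S_def by (rule sigmoid_sub_sq_nonneg sigmoid_sub_sq_le)+
  have "\<bar>D\<bar> \<le> \<bar>z \<bullet> (ws - w)\<bar>"
    unfolding D_def inner_diff_right using abs_gsoftplus_diff_le[OF assms] by (simp add: abs_minus_commute)
  then have "\<tau> * \<bar>D\<bar> * (S - S\<^sup>2) \<le> \<tau> * \<bar>z \<bullet> (ws - w)\<bar> * (1 / 4)"
    using assms m by (intro mult_mono) auto
  then have "\<bar>\<tau> * D * (S - S\<^sup>2)\<bar> \<le> \<tau> * \<bar>z \<bullet> (ws - w)\<bar> * (1 / 4)"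
    using assms m(1) by (simp add: abs_mult)
  moreover have "S\<^sup>2 \<le> 1"
    using sigmoid_pos[of "\<tau> * (z \<bullet> w)"] sigmoid_less_1[of "\<tau> * (z \<bullet> w)"]
    by (simp add: S_def power_le_one)
  ultimately have "\<bar>2 * (S\<^sup>2 + \<tau> * D * (S - S\<^sup>2))\<bar> \<le> 2 + \<tau> / 2 * \<bar>z \<bullet> (ws - w)\<bar>"
    by (simp add: abs_le_iff) (use zero_le_power2[of S] in linarith)
  then show ?thesis
    unfolding s_fun_def Let_def S_def[symmetric] D_def[symmetric] .
qed

lemma s_fun_add_s_fun_uminus_ge:
  assumes "0 < \<tau>"
  shows "1 - \<tau> / 2 * \<bar>z \<bullet> (ws - w)\<bar> \<le> s_fun \<tau> w ws z + s_fun \<tau> w ws (- z)"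
proof -
  define S where "S = sigmoid (\<tau> * (z \<bullet> w))"
  have "2 * S\<^sup>2 - \<tau> / 2 * max 0 (z \<bullet> (ws - w)) \<le> s_fun \<tau> w ws z"
    unfolding S_def by (rule s_fun_ge[OF assms])
  moreover have "2 * (1 - S)\<^sup>2 - \<tau> / 2 * max 0 (- (z \<bullet> (ws - w))) \<le> s_fun \<tau> w ws (- z)"
    using s_fun_ge[OF assms, of "- z" w ws] sigmoid_minus[of "\<tau> * (z \<bullet> w)"] by (simp add: S_def)
  moreover have "1 \<le> 2 * S\<^sup>2 + 2 * (1 - S)\<^sup>2"
    using zero_le_power2[of "2 * S - 1"] by (simp add: power2_eq_square algebra_simps)
  moreover have "\<tau> / 2 * max 0 (z \<bullet> (ws - w)) + \<tau> / 2 * max 0 (- (z \<bullet> (ws - w)))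
      = \<tau> / 2 * \<bar>z \<bullet> (ws - w)\<bar>"
    by (simp add: max_def abs_if distrib_left)
  ultimately show ?thesis
    by linarith
qed

section \<open>The standard Gaussian on \<open>real^'d\<close>\<close>

lemma indicator_PiE_eq_prod:
  assumes "finite I" "x \<in> extensional I"
  shows "(indicator (Pi\<^sub>E I A) x :: ennreal) = (\<Prod>i\<in>I. indicator (A i) (x i))"
proof (cases "x \<in> Pi\<^sub>E I A")
  case True
  then show ?thesis by (auto simp: indicator_def PiE_def Pi_def intro!: prod.neutral)
next
  case False
  then obtain i where "i \<in> I" "x i \<notin> A i"
    using assms(2) by (auto simp: PiE_def)
  then show ?thesis
    using False assms(1) by (auto simp: indicator_def intro!: prod_zero)
qed

lemma PiM_density_eq_density_prod:
  fixes f :: "real \<Rightarrow> ennreal"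
  assumes "finite I" and [measurable]: "f \<in> borel_measurable borel"
    and "prob_space (density lborel f)"
  shows "PiM I (\<lambda>_. density lborel f) = density (PiM I (\<lambda>_. lborel)) (\<lambda>x. \<Prod>i\<in>I. f (x i))"
proof -
  interpret N: product_prob_space "\<lambda>_. density lborel f" I
    using assms(3) by (simp add: product_prob_space_def product_prob_space_axioms_def
        product_sigma_finite_def prob_space_imp_sigma_finite)
  interpret L: product_sigma_finite "\<lambda>_. (lborel :: real measure)"
    by (simp add: product_sigma_finite_def lborel.sigma_finite_measure_axioms)
  show ?thesis
  proof (rule N.PiM_eqI[symmetric])
    show "sets (density (PiM I (\<lambda>_. lborel)) (\<lambda>x. \<Prod>i\<in>I. f (x i))) = sets (PiM I (\<lambda>_. density lborel f))"
      by (simp only: sets_density) (intro sets_PiM_cong; simp)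
  next
    fix A assume A: "\<And>i. i \<in> I \<Longrightarrow> A i \<in> sets (density lborel f)"
    have "emeasure (density (PiM I (\<lambda>_. lborel)) (\<lambda>x. \<Prod>i\<in>I. f (x i))) (Pi\<^sub>E I A)
        = (\<integral>\<^sup>+ x. (\<Prod>i\<in>I. f (x i) * indicator (A i) (x i)) \<partial>PiM I (\<lambda>_. lborel))"
      using A assms(1)
      by (subst emeasure_density)
         (auto intro!: sets_PiM_I_finite nn_integral_cong
           simp: indicator_PiE_eq_prod prod.distrib space_PiM PiE_iff)
    also have "\<dots> = (\<Prod>i\<in>I. emeasure (density lborel f) (A i))"
      using A assms(1) by (subst L.product_nn_integral_prod) (auto simp: emeasure_density)
    finally show "emeasure (density (PiM I (\<lambda>_. lborel)) (\<lambda>x. \<Prod>i\<in>I. f (x i))) (Pi\<^sub>E I A)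
        = (\<Prod>i\<in>I. emeasure (density lborel f) (A i))" .
  qed fact
qed

definition basis_sum :: "('a::euclidean_space \<Rightarrow> real) \<Rightarrow> 'a" where
  "basis_sum f = (\<Sum>b\<in>Basis. f b *\<^sub>R b)"

lemma inner_basis_sum: "b \<in> Basis \<Longrightarrow> basis_sum f \<bullet> b = f b"
  unfolding basis_sum_def by (simp add: inner_sum_left inner_Basis if_distrib cong: if_cong)

lemma norm_basis_sum_sq: "(norm (basis_sum f))\<^sup>2 = (\<Sum>b\<in>Basis. (f b)\<^sup>2)"
  unfolding power2_norm_eq_inner by (subst euclidean_inner) (simp add: inner_basis_sum power2_eq_square)

lemma measurable_basis_sum [measurable]:
  "(basis_sum :: ('a::euclidean_space \<Rightarrow> real) \<Rightarrow> 'a) \<in> measurable (PiM Basis (\<lambda>_. lborel)) borel"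
  unfolding basis_sum_def by measurable

definition std_normal_coords :: "('a::euclidean_space \<Rightarrow> real) measure" where
  "std_normal_coords = PiM Basis (\<lambda>_. std_normal_distribution)"

lemma std_gauss_eq_distr_std_normal_coords:
  "(std_gauss :: (real^'d) measure) = distr std_normal_coords borel basis_sum"
proof -
  have density: "ennreal ((2 * pi) powr (- real CARD('d) / 2) * exp (- (norm (basis_sum f :: real^'d))\<^sup>2 / 2))
      = (\<Prod>b\<in>Basis. ennreal (std_normal_density (f b)))" for f :: "real^'d \<Rightarrow> real"
  proof -
    have "(\<Prod>b\<in>(Basis :: (real^'d) set). std_normal_density (f b))
        = (1 / sqrt (2 * pi)) ^ CARD('d) * exp (\<Sum>b\<in>Basis. - (f b)\<^sup>2 / 2)"
      by (simp add: std_normal_density_def prod_dividef exp_sum power_one_over)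
    also have "(1 / sqrt (2 * pi)) ^ CARD('d) = ((2 * pi) powr (- 1 / 2)) ^ CARD('d)"
      by (simp add: powr_minus_divide powr_half_sqrt)
    also have "\<dots> = (2 * pi) powr (- real CARD('d) / 2)"
      by (simp add: powr_power)
    also have "(\<Sum>b\<in>Basis. - (f b)\<^sup>2 / 2) = - (norm (basis_sum f :: real^'d))\<^sup>2 / 2"
      by (simp add: norm_basis_sum_sq sum_negf sum_divide_distrib)
    finally show ?thesis
      by (simp add: prod_ennreal)
  qed
  have "(std_gauss :: (real^'d) measure) = density (distr (PiM Basis (\<lambda>_. lborel)) borel basis_sum)
      (\<lambda>x. ennreal ((2 * pi) powr (- real CARD('d) / 2) * exp (- (norm (x :: real^'d))\<^sup>2 / 2)))"
    unfolding std_gauss_def basis_sum_def[abs_def] by (subst lborel_eq) rule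
  also have "\<dots> = distr (density (PiM Basis (\<lambda>_. lborel)) (\<lambda>f. \<Prod>b\<in>Basis. ennreal (std_normal_density (f b))))
      borel basis_sum"
    by (subst density_distr) (simp_all only: density measurable_basis_sum, measurable)
  also have "density (PiM Basis (\<lambda>_. lborel)) (\<lambda>f. \<Prod>b\<in>Basis. ennreal (std_normal_density (f b)))
      = (std_normal_coords :: (real^'d \<Rightarrow> real) measure)"
    unfolding std_normal_coords_def
    by (rule PiM_density_eq_density_prod[symmetric]) (auto simp: prob_space_normal_density)
  finally show ?thesis .
qed

lemma prob_space_std_normal_coords: "prob_space (std_normal_coords :: ('a::euclidean_space \<Rightarrow> real) measure)"
  unfolding std_normal_coords_def by (rule prob_space_PiM) (simp add: prob_space_normal_density)

lemma sets_std_normal_coords: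
  "sets (std_normal_coords :: ('a::euclidean_space \<Rightarrow> real) measure) = sets (PiM Basis (\<lambda>_. borel))"
  unfolding std_normal_coords_def by (intro sets_PiM_cong) auto

lemma space_std_normal_coords:
  "space (std_normal_coords :: ('a::euclidean_space \<Rightarrow> real) measure) = Pi\<^sub>E Basis (\<lambda>_. UNIV)"
  by (simp add: std_normal_coords_def space_PiM)

lemma distributed_std_normal_coords_component:
  assumes "b \<in> Basis"
  shows "distributed (std_normal_coords :: ('a::euclidean_space \<Rightarrow> real) measure) lborel (\<lambda>f. f b)
           std_normal_density"
  unfolding distributed_def
proof (intro conjI)
  have "distr (std_normal_coords :: ('a \<Rightarrow> real) measure) lborel (\<lambda>f. f b)
      = distr std_normal_coords std_normal_distribution (\<lambda>f. f b)"
    by (rule distr_cong) auto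
  also have "\<dots> = std_normal_distribution"
    unfolding std_normal_coords_def
    by (rule distr_PiM_component) (auto simp: prob_space_normal_density assms)
  finally show "distr (std_normal_coords :: ('a \<Rightarrow> real) measure) lborel (\<lambda>f. f b) = std_normal_distribution" .
  show "(\<lambda>f. f b) \<in> measurable (std_normal_coords :: ('a \<Rightarrow> real) measure) lborel"
    using assms by (simp add: measurable_def std_normal_coords_def space_PiM PiE_def)
qed auto

lemma std_normal_coords_eq_PiM_distr:
  "(std_normal_coords :: ('a::euclidean_space \<Rightarrow> real) measure)
     = (\<Pi>\<^sub>M b\<in>Basis. distr std_normal_coords borel (\<lambda>f. f b))"
proof (rule trans[OF std_normal_coords_def PiM_cong])
  fix b :: 'a assume "b \<in> Basis"
  from distributed_std_normal_coords_component[OF this]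
  show "std_normal_distribution = distr std_normal_coords borel (\<lambda>f. f b)"
    by (simp add: distributed_def distr_cong[OF refl sets_lborel[symmetric]])
qed simp

lemma indep_vars_std_normal_coords:
  "prob_space.indep_vars (std_normal_coords :: ('a::euclidean_space \<Rightarrow> real) measure)
     (\<lambda>_. borel) (\<lambda>b f. f b) Basis"
proof -
  interpret prob_space "std_normal_coords :: ('a \<Rightarrow> real) measure"
    by (rule prob_space_std_normal_coords)
  have random_variable: "random_variable borel (\<lambda>f. f b)" if "b \<in> Basis" for b
    using distributed_std_normal_coords_component[OF that] by (simp add: distributed_def)
  have "distr std_normal_coords (\<Pi>\<^sub>M b\<in>Basis. borel) (\<lambda>f. \<lambda>b\<in>Basis. f b)
      = distr std_normal_coords std_normal_coords (\<lambda>f. f)"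
    by (rule distr_cong)
       (auto simp: sets_std_normal_coords space_std_normal_coords PiE_def extensional_restrict)
  also have "\<dots> = std_normal_coords"
    by (rule distr_id2) simp
  also have "\<dots> = (\<Pi>\<^sub>M b\<in>Basis. distr std_normal_coords borel (\<lambda>f. f b))"
    by (rule std_normal_coords_eq_PiM_distr)
  finally show ?thesis
    by (subst indep_vars_iff_distr_eq_PiM') (auto simp: random_variable)
qed

text \<open>A projection onto a unit vector is a sum of independent centred normals whose variances
  \<open>(b \<bullet> e)\<^sup>2\<close> add up to \<open>1\<close>; basis vectors orthogonal to \<open>e\<close> must be left out,
  as the sum rule for normal distributions requires positive variances.\<close>
lemma distributed_inner_basis_sum:
  fixes e :: "'a::euclidean_space"
  assumes e: "norm e = 1"
  shows "distributed std_normal_coords lborel (\<lambda>f. basis_sum f \<bullet> e) std_normal_density"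
proof -
  interpret prob_space "std_normal_coords :: ('a \<Rightarrow> real) measure"
    by (rule prob_space_std_normal_coords)
  define J where "J = {b \<in> Basis. b \<bullet> e \<noteq> 0}"
  have J: "finite J" "J \<subseteq> Basis"
    unfolding J_def by auto
  have "J \<noteq> {}"
    using e euclidean_all_zero_iff[of e] by (auto simp: J_def inner_commute)
  have inner_eq: "basis_sum f \<bullet> e = (\<Sum>b\<in>J. (b \<bullet> e) * f b)" for f :: "'a \<Rightarrow> real"
  proof -
    have "basis_sum f \<bullet> e = (\<Sum>b\<in>Basis. (b \<bullet> e) * f b)"
      by (simp add: basis_sum_def inner_sum_left mult.commute)
    also have "\<dots> = (\<Sum>b\<in>J. (b \<bullet> e) * f b)"
      by (rule sum.mono_neutral_right) (auto simp: J_def)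
    finally show ?thesis .
  qed
  have variance: "(\<Sum>b\<in>J. (\<bar>b \<bullet> e\<bar> * 1)\<^sup>2) = 1"
  proof -
    have "(\<Sum>b\<in>J. (\<bar>b \<bullet> e\<bar> * 1)\<^sup>2) = (\<Sum>b\<in>Basis. (e \<bullet> b) * (e \<bullet> b))"
      by (rule sum.mono_neutral_cong_left) (auto simp: J_def power2_eq_square inner_commute)
    also have "\<dots> = (norm e)\<^sup>2"
      by (simp add: power2_norm_eq_inner euclidean_inner[of e e])
    finally show ?thesis
      using e by simp
  qed
  have "indep_vars (\<lambda>_. borel) (\<lambda>b f. (b \<bullet> e) * f b) J"
    using indep_vars_compose2[OF indep_vars_subset[OF indep_vars_std_normal_coords J(2)],
        of "\<lambda>b x. (b \<bullet> e) * x" "\<lambda>_. borel"]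
    by simp
  moreover have "distributed std_normal_coords lborel (\<lambda>f. (b \<bullet> e) * f b) (normal_density 0 (\<bar>b \<bullet> e\<bar> * 1))"
    if "b \<in> J" for b
    using normal_density_affine[OF distributed_std_normal_coords_component[of b], of "b \<bullet> e" 0] that
    by (auto simp: J_def)
  ultimately have "distributed std_normal_coords lborel (\<lambda>f. \<Sum>b\<in>J. (b \<bullet> e) * f b)
     (normal_density (\<Sum>b\<in>J. 0) (sqrt (\<Sum>b\<in>J. (\<bar>b \<bullet> e\<bar> * 1)\<^sup>2)))"
    by (intro sum_indep_normal J(1) \<open>J \<noteq> {}\<close>) (auto simp: J_def)
  then show ?thesis
    unfolding variance inner_eq by simp
qed

lemma
  fixes e :: "real^'d" and g :: "real \<Rightarrow> real"
  assumes e: "norm e = 1" and [measurable]: "g \<in> borel_measurable borel"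
  shows integrable_std_gauss_inner_iff:
      "integrable std_gauss (\<lambda>x. g (x \<bullet> e)) \<longleftrightarrow> integrable lborel (\<lambda>t. std_normal_density t * g t)"
    and integral_std_gauss_inner:
      "(\<integral>x. g (x \<bullet> e) \<partial>std_gauss) = (\<integral>t. std_normal_density t * g t \<partial>lborel)"
proof -
  have measurable: "basis_sum \<in> measurable (std_normal_coords :: (real^'d \<Rightarrow> real) measure) borel"
    using measurable_basis_sum by (simp add: measurable_def sets_std_normal_coords std_normal_coords_def space_PiM)
  have g_inner: "(\<lambda>x::real^'d. g (x \<bullet> e)) \<in> borel_measurable borel"
    by measurable
  show "integrable std_gauss (\<lambda>x. g (x \<bullet> e)) \<longleftrightarrow> integrable lborel (\<lambda>t. std_normal_density t * g t)"
    unfolding std_gauss_eq_distr_std_normal_coords integrable_distr_eq[OF measurable g_inner]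
    by (rule distributed_integrable[OF distributed_inner_basis_sum[OF e], symmetric]) auto
  show "(\<integral>x. g (x \<bullet> e) \<partial>std_gauss) = (\<integral>t. std_normal_density t * g t \<partial>lborel)"
    unfolding std_gauss_eq_distr_std_normal_coords integral_distr[OF measurable g_inner]
    by (rule distributed_integral[OF distributed_inner_basis_sum[OF e], symmetric]) auto
qed

lemma lborel_distr_uminus_euclidean: "distr lborel borel uminus = (lborel :: 'a::euclidean_space measure)"
  using lborel_affine[of "- 1" "0 :: 'a"] by (simp add: density_1)

lemma distr_uminus_std_gauss: "distr std_gauss borel uminus = (std_gauss :: (real^'d) measure)"
proof -
  define \<rho> where "\<rho> = (\<lambda>x :: real^'d. ennreal ((2 * pi) powr (- real CARD('d) / 2) * exp (- (norm x)\<^sup>2 / 2)))"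
  have "std_gauss = density (distr lborel borel uminus) \<rho>"
    by (simp add: std_gauss_def \<rho>_def lborel_distr_uminus_euclidean)
  also have "\<dots> = distr (density lborel (\<lambda>x. \<rho> (- x))) borel uminus"
    by (rule density_distr) (auto simp: \<rho>_def)
  finally show ?thesis
    by (simp add: std_gauss_def \<rho>_def)
qed

lemma
  fixes f :: "real^'d \<Rightarrow> real"
  assumes [measurable]: "f \<in> borel_measurable borel"
  shows integrable_std_gauss_uminus_iff: "integrable std_gauss (\<lambda>x. f (- x)) \<longleftrightarrow> integrable std_gauss f"
    and integral_std_gauss_uminus: "(\<integral>x. f (- x) \<partial>std_gauss) = (\<integral>x. f x \<partial>std_gauss)"
proof -
  have uminus: "uminus \<in> measurable (std_gauss :: (real^'d) measure) borel"
    by (simp add: std_gauss_def)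
  show "integrable std_gauss (\<lambda>x. f (- x)) \<longleftrightarrow> integrable std_gauss f"
    using integrable_distr_eq[OF uminus, of f] by (simp add: distr_uminus_std_gauss)
  show "(\<integral>x. f (- x) \<partial>std_gauss) = (\<integral>x. f x \<partial>std_gauss)"
    using integral_distr[OF uminus, of f] by (simp add: distr_uminus_std_gauss)
qed

lemma
  fixes e :: "real^'d"
  assumes e: "norm e = 1"
  shows integrable_std_gauss_inner_power: "integrable std_gauss (\<lambda>x. (x \<bullet> e) ^ k)"
    and integral_std_gauss_inner_power_even:
      "(\<integral>x. (x \<bullet> e) ^ (2 * k) \<partial>std_gauss) = fact (2 * k) / (2 ^ k * fact k)"
  using integrable_std_gauss_inner_iff[OF e, of "\<lambda>t. t ^ k"] integrable_std_normal_moment[of k]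
    integral_std_gauss_inner[OF e, of "\<lambda>t. t ^ (2 * k)"] integral_std_normal_moment_even[of k]
  by simp_all

lemma
  fixes u :: "real^'d"
  shows integrable_std_gauss_inner_sq: "integrable std_gauss (\<lambda>x. (x \<bullet> u)\<^sup>2)"
    and integral_std_gauss_inner_sq: "(\<integral>x. (x \<bullet> u)\<^sup>2 \<partial>std_gauss) = (norm u)\<^sup>2"
proof -
  have "integrable std_gauss (\<lambda>x. (x \<bullet> u)\<^sup>2) \<and> (\<integral>x. (x \<bullet> u)\<^sup>2 \<partial>std_gauss) = (norm u)\<^sup>2"
  proof (cases "u = 0")
    case False
    define e where "e = u /\<^sub>R norm u"
    have e: "norm e = 1"
      using False by (simp add: e_def)
    have "(x \<bullet> u)\<^sup>2 = (norm u)\<^sup>2 * (x \<bullet> e) ^ (2 * 1)" for x :: "real^'d"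
      using False by (simp add: e_def power2_eq_square field_simps)
    then show ?thesis
      using integrable_std_gauss_inner_power[OF e, of 2] integral_std_gauss_inner_power_even[OF e, of 1]
      by simp
  qed simp
  then show "integrable std_gauss (\<lambda>x. (x \<bullet> u)\<^sup>2)" "(\<integral>x. (x \<bullet> u)\<^sup>2 \<partial>std_gauss) = (norm u)\<^sup>2"
    by auto
qed

lemma integral_std_gauss_inner_power_4:
  fixes e :: "real^'d"
  assumes "norm e = 1"
  shows "(\<integral>x. (x \<bullet> e) ^ 4 \<partial>std_gauss) = 3"
  using integral_std_gauss_inner_power_even[OF assms, of 2] by (simp add: fact_numeral)

section \<open>The curvature bound\<close>

lemma abs_mult_sq_le_amgm:
  fixes a b k :: real
  assumes "0 < k"
  shows "\<bar>a\<bar> * b\<^sup>2 \<le> (a\<^sup>2 / k + k * b ^ 4) / 2"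
proof -
  have "2 * k * (\<bar>a\<bar> * b\<^sup>2) \<le> a\<^sup>2 + (k * b\<^sup>2)\<^sup>2"
    using zero_le_power2[of "\<bar>a\<bar> - k * b\<^sup>2"] by (simp add: power2_eq_square algebra_simps)
  then show ?thesis
    using assms by (simp add: field_simps power2_eq_square power4_eq_xxxx mult_ac)
qed

lemma
  fixes u v :: "real^'d"
  assumes v: "norm v = 1"
  shows integrable_std_gauss_abs_inner_mult_sq: "integrable std_gauss (\<lambda>x. \<bar>x \<bullet> u\<bar> * (x \<bullet> v)\<^sup>2)"
    and integral_std_gauss_abs_inner_mult_sq_le: "(\<integral>x. \<bar>x \<bullet> u\<bar> * (x \<bullet> v)\<^sup>2 \<partial>std_gauss) \<le> 2 * norm u"
proof -
  have majorant: "integrable std_gauss (\<lambda>x. ((x \<bullet> u)\<^sup>2 / k + k * (x \<bullet> v) ^ 4) / 2)" for k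
    using integrable_std_gauss_inner_sq[of u] integrable_std_gauss_inner_power[OF v, of 4] by simp
  show integrable: "integrable std_gauss (\<lambda>x. \<bar>x \<bullet> u\<bar> * (x \<bullet> v)\<^sup>2)"
    using abs_mult_sq_le_amgm[of 1]
    by (intro Bochner_Integration.integrable_bound[OF majorant[of 1]] AE_I2)
       (auto simp: std_gauss_def abs_mult intro: order_trans[OF _ abs_ge_self])
  show "(\<integral>x. \<bar>x \<bullet> u\<bar> * (x \<bullet> v)\<^sup>2 \<partial>std_gauss) \<le> 2 * norm u"
  proof (cases "u = 0")
    case False
    have "(\<integral>x. \<bar>x \<bullet> u\<bar> * (x \<bullet> v)\<^sup>2 \<partial>std_gauss)
        \<le> (\<integral>x. ((x \<bullet> u)\<^sup>2 / norm u + norm u * (x \<bullet> v) ^ 4) / 2 \<partial>std_gauss)"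
      using False by (intro integral_mono integrable majorant abs_mult_sq_le_amgm) auto
    also have "\<dots> = ((norm u)\<^sup>2 / norm u + norm u * 3) / 2"
      using integrable_std_gauss_inner_sq[of u] integrable_std_gauss_inner_power[OF v, of 4]
      by (simp add: integral_std_gauss_inner_sq integral_std_gauss_inner_power_4[OF v])
    also have "\<dots> = 2 * norm u"
      by (simp add: power2_eq_square)
    finally show ?thesis .
  qed simp
qed

lemma measurable_s_fun [measurable]: "s_fun \<tau> w ws \<in> borel_measurable borel"
  unfolding s_fun_def Let_def sigmoid_def gsoftplus_def by measurable

lemma std_gauss_s_fun_integral_ge:
  fixes w ws v :: "real^'d"
  assumes \<tau>: "0 < \<tau>" and v: "norm v = 1"
  shows "1 - \<tau> * norm (ws - w) \<le> 2 * (\<integral>z. s_fun \<tau> w ws z * (z \<bullet> v)\<^sup>2 \<partial>std_gauss)"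
proof -
  define F where "F z = s_fun \<tau> w ws z * (z \<bullet> v)\<^sup>2" for z :: "real^'d"
  define B where "B z = \<bar>z \<bullet> (ws - w)\<bar> * (z \<bullet> v)\<^sup>2" for z :: "real^'d"
  have [measurable]: "F \<in> borel_measurable borel"
    unfolding F_def by measurable
  have B: "integrable std_gauss B" "(\<integral>z. B z \<partial>std_gauss) \<le> 2 * norm (ws - w)"
    unfolding B_def by (rule integrable_std_gauss_abs_inner_mult_sq[OF v]
        integral_std_gauss_abs_inner_mult_sq_le[OF v])+
  have v2: "integrable std_gauss (\<lambda>z. (z \<bullet> v)\<^sup>2)" "(\<integral>z. (z \<bullet> v)\<^sup>2 \<partial>std_gauss) = 1"
    using integral_std_gauss_inner_sq[of v] v by (simp_all add: integrable_std_gauss_inner_sq)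
  have F: "integrable std_gauss F"
  proof (rule Bochner_Integration.integrable_bound)
    show "integrable std_gauss (\<lambda>z. 2 * (z \<bullet> v)\<^sup>2 + \<tau> / 2 * B z)"
      using v2 B by simp
    show "AE z in std_gauss. norm (F z) \<le> norm (2 * (z \<bullet> v)\<^sup>2 + \<tau> / 2 * B z)"
    proof (rule AE_I2)
      fix z :: "real^'d"
      have "\<bar>F z\<bar> \<le> (2 + \<tau> / 2 * \<bar>z \<bullet> (ws - w)\<bar>) * (z \<bullet> v)\<^sup>2"
        unfolding F_def abs_mult abs_power2 by (intro mult_right_mono abs_s_fun_le \<tau>) simp
      then show "norm (F z) \<le> norm (2 * (z \<bullet> v)\<^sup>2 + \<tau> / 2 * B z)"
        using \<tau> by (simp add: B_def algebra_simps)
    qed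
  qed (simp add: std_gauss_def)
  have F_uminus: "integrable std_gauss (\<lambda>z. F (- z))" "(\<integral>z. F (- z) \<partial>std_gauss) = (\<integral>z. F z \<partial>std_gauss)"
    using F by (simp_all add: integrable_std_gauss_uminus_iff integral_std_gauss_uminus)
  have "(z \<bullet> v)\<^sup>2 - \<tau> / 2 * B z \<le> F z + F (- z)" for z
  proof -
    have "(1 - \<tau> / 2 * \<bar>z \<bullet> (ws - w)\<bar>) * (z \<bullet> v)\<^sup>2 \<le> (s_fun \<tau> w ws z + s_fun \<tau> w ws (- z)) * (z \<bullet> v)\<^sup>2"
      by (intro mult_right_mono s_fun_add_s_fun_uminus_ge \<tau>) simp
    then show ?thesis
      by (simp add: F_def B_def algebra_simps)
  qed
  then have "(\<integral>z. (z \<bullet> v)\<^sup>2 - \<tau> / 2 * B z \<partial>std_gauss) \<le> (\<integral>z. F z + F (- z) \<partial>std_gauss)"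
    using v2 B F F_uminus by (intro integral_mono) auto
  then have "1 - \<tau> / 2 * (\<integral>z. B z \<partial>std_gauss) \<le> 2 * (\<integral>z. F z \<partial>std_gauss)"
    using v2 B F F_uminus by simp
  moreover have "\<tau> / 2 * (\<integral>z. B z \<partial>std_gauss) \<le> \<tau> * norm (ws - w)"
    using B(2) \<tau> by simp
  ultimately show ?thesis
    unfolding F_def by linarith
qed

lemma exp_minus_4_bound_le:
  assumes "0 \<le> t"
  shows "2 * (exp (- 4) / (1 + exp a)\<^sup>2 - t / sqrt (2 * pi)) \<le> (1 - t) / 2"
proof -
  have "exp (- 4) / (1 + exp a)\<^sup>2 \<le> exp (- 4)"
    using one_le_power[of "1 + exp a" 2] by (simp add: divide_le_eq)
  also have "exp (- 4) \<le> 1 / (1 + (4 :: real))"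
    using exp_ge_add_one_self[of 4] by (simp add: exp_minus divide_simps)
  finally have "exp (- 4) / (1 + exp a)\<^sup>2 \<le> 1 / 5"
    by simp
  moreover have "sqrt (2 * pi) \<le> 4"
    using pi_less_4 by (simp add: real_sqrt_le_iff' real_le_lsqrt)
  then have "t / 4 \<le> t / sqrt (2 * pi)"
    using assms by (intro divide_left_mono) auto
  ultimately have "2 * (exp (- 4) / (1 + exp a)\<^sup>2 - t / sqrt (2 * pi)) \<le> 2 * (1 / 5 - t / 4)"
    by (intro mult_left_mono diff_mono) auto
  then show ?thesis
    by simp
qed

theorem mainTheorem3:
  fixes \<tau> r :: real and w ws v :: "real^'d"
    and n :: nat and x :: "nat \<Rightarrow> real^'d" and y :: "nat \<Rightarrow> real"
  assumes "0 < \<tau>" "\<tau> \<le> 1"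
    and "norm (w - ws) \<le> r"
    and "norm v = 1"
  shows "((\<forall>i<n. y i = softplus (x i \<bullet> ws)) \<longrightarrow>
           (\<exists>g :: real^'d \<Rightarrow> real^'d.
              (\<forall>u. (grad_loss \<tau> n x y has_derivative (\<lambda>h. g u \<bullet> h)) (at u)) \<and>
              (g has_derivative
                 (\<lambda>h. ((1 / real n) *\<^sub>R (\<Sum>i<n. s_fun \<tau> w ws (x i) *\<^sub>R outer (x i))) *v h))
                 (at w)))
       \<and> integral\<^sup>L std_gauss (\<lambda>z. s_fun \<tau> w ws z * (z \<bullet> v)\<^sup>2)
           \<ge> 2 * (exp (-4) / (1 + exp (\<tau>\<^sup>2 * (norm w)\<^sup>2 / 2))\<^sup>2 - \<tau> * r / sqrt (2 * pi))"
proof -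
  have "0 \<le> r"
    using assms(3) norm_ge_zero order_trans by blast
  have "1 - \<tau> * r \<le> 1 - \<tau> * norm (ws - w)"
    using assms(1,3) by (simp add: norm_minus_commute)
  also have "\<dots> \<le> 2 * integral\<^sup>L std_gauss (\<lambda>z. s_fun \<tau> w ws z * (z \<bullet> v)\<^sup>2)"
    by (rule std_gauss_s_fun_integral_ge[OF assms(1,4)])
  finally have "(1 - \<tau> * r) / 2 \<le> integral\<^sup>L std_gauss (\<lambda>z. s_fun \<tau> w ws z * (z \<bullet> v)\<^sup>2)"
    by simp
  moreover have "2 * (exp (-4) / (1 + exp (\<tau>\<^sup>2 * (norm w)\<^sup>2 / 2))\<^sup>2 - \<tau> * r / sqrt (2 * pi))
      \<le> (1 - \<tau> * r) / 2"
    using assms(1) \<open>0 \<le> r\<close> by (intro exp_minus_4_bound_le) simp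
  ultimately show ?thesis
    using grad_loss_hessian[OF assms(1)] by auto
qed

end
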